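(* For every integer $m\ge2$ and all nonnegative integers $k_1,\dots,k_{m-1}$, $d^{(m)}_{k_1,\dots,k_{m-1}}$ is a positive integer divisible by $m$.
   Context: For $1\le j\le m$ and integers $k_1,\dots,k_{m-1}\ge0$, $e^{(m),j}_{k_1,\dots,k_{m-1}}=\prod_{1\le i\le m,\,i\ne j}(i-j)^{k_{(i-j)\bmod m}}$, where $(i-j)\bmod m$ denotes the representative in $\{1,\dots,m-1\}$. Then $d^{(m)}_{k_1,\dots,k_{m-1}}=2\sum_{j=1}^{p}e^{(m),j}_{k_1,\dots,k_{m-1}}$ if $m=2p$, and $d^{(m)}_{k_1,\dots,k_{m-1}}=e^{(m),p+1}_{k_1,\dots,k_{m-1}}+2\sum_{j=1}^{p}e^{(m),j}_{k_1,\dots,k_{m-1}}$ if $m=2p+1$. *)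

theory Defs
  imports Main
begin

text \<open>The exponent sequence k_1,...,k_{m-1} is given as a function k :: nat => nat;
only the values k 1, ..., k (m-1) are used.\<close>

definition e_coef :: "nat \<Rightarrow> (nat \<Rightarrow> nat) \<Rightarrow> nat \<Rightarrow> int" where
  "e_coef m k j = (\<Prod>i\<in>{1..m} - {j}.
      (int i - int j) ^ (k (nat ((int i - int j) mod int m))))"

definition d_coef :: "nat \<Rightarrow> (nat \<Rightarrow> nat) \<Rightarrow> int" where
  "d_coef m k =
     (if even m then 2 * (\<Sum>j=1..m div 2. e_coef m k j)
      else e_coef m k (m div 2 + 1) + 2 * (\<Sum>j=1..m div 2. e_coef m k j))"

end

theory Submission imports Defs Complex_Main "HOL-Number_Theory.Cong" begin

text \<open>Reindexing the product by l = (i - j) mod m writes e^{(m),j} as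
\<Prod>_{l=1}^{m-1} v_j(l)^{k_l}, where v_j(l) (cyc_diff m j l) is the representative of l modulo m
with j + v_j(l) \<in> {1..m}.  So every e^{(m),j} is congruent to \<Prod> l^{k_l} modulo m, and d is a
sum of m of them.  Passing from j to j + 1 changes only the factor with l = m - j, so
e^{(m),j+1} / e^{(m),j} = (-j/(m-j))^{k_{m-j}} lies in [-j/(m-j), 1] for j \<le> m/2; starting from
e^{(m),1} > 0, a backward induction on the tail sums keeps d positive.\<close>

definition cyc_diff :: "nat \<Rightarrow> nat \<Rightarrow> nat \<Rightarrow> int" where
  "cyc_diff m j l = (if l \<le> m - j then int l else int l - int m)"

lemma bij_betw_cyc_shift:
  fixes j m :: nat
  assumes "1 \<le> j" "j \<le> m"
  shows "bij_betw (\<lambda>l. if l \<le> m - j then l + j else l + j - m) {1..m-1} ({1..m} - {j})"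
proof (rule bij_betw_imageI)
  let ?g = "\<lambda>l. if l \<le> m - j then l + j else l + j - m"
  show "inj_on ?g {1..m-1}"
    using assms by (auto simp: inj_on_def split: if_splits)
  show "?g ` {1..m-1} = {1..m} - {j}"
  proof
    show "?g ` {1..m-1} \<subseteq> {1..m} - {j}"
      using assms by auto
    show "{1..m} - {j} \<subseteq> ?g ` {1..m-1}"
    proof
      fix i assume i: "i \<in> {1..m} - {j}"
      show "i \<in> ?g ` {1..m-1}"
      proof (cases "j < i")
        case True
        then show ?thesis using i assms by (intro image_eqI[where x="i - j"]) auto
      next
        case False
        then show ?thesis using i assms by (intro image_eqI[where x="i + m - j"]) auto
      qed
    qed
  qed
qed

lemma cyc_diff_mod: "cyc_diff m j l mod int m = int l mod int m"
  by (simp add: cyc_diff_def mod_diff_right_eq[symmetric])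

lemma e_coef_eq_prod_cyc_diff:
  assumes "1 \<le> j" "j \<le> m"
  shows "e_coef m k j = (\<Prod>l\<in>{1..m-1}. cyc_diff m j l ^ k l)"
proof -
  let ?g = "\<lambda>l. if l \<le> m - j then l + j else l + j - m"
  have "e_coef m k j =
      (\<Prod>l\<in>{1..m-1}. (int (?g l) - int j) ^ k (nat ((int (?g l) - int j) mod int m)))"
    unfolding e_coef_def using prod.reindex_bij_betw[OF bij_betw_cyc_shift[OF assms], symmetric]
    by simp
  also have "\<dots> = (\<Prod>l\<in>{1..m-1}. cyc_diff m j l ^ k l)"
  proof (rule prod.cong)
    fix l assume l: "l \<in> {1..m-1}"
    have diff: "int (?g l) - int j = cyc_diff m j l"
      using l assms by (auto simp: cyc_diff_def)
    have "cyc_diff m j l mod int m = int l"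
      using l by (auto simp: cyc_diff_mod intro: mod_pos_pos_trivial)
    then show "(int (?g l) - int j) ^ k (nat ((int (?g l) - int j) mod int m)) = cyc_diff m j l ^ k l"
      by (simp add: diff)
  qed simp
  finally show ?thesis .
qed

lemma e_coef_nonzero:
  assumes "1 \<le> j" "j \<le> m"
  shows "e_coef m k j \<noteq> 0"
  by (auto simp: e_coef_eq_prod_cyc_diff[OF assms] cyc_diff_def)

lemma e_coef_1_pos:
  assumes "1 \<le> m"
  shows "e_coef m k 1 > 0"
  using assms by (auto simp: e_coef_eq_prod_cyc_diff cyc_diff_def intro!: prod_pos)

lemma e_coef_cong_prod:
  assumes "1 \<le> j" "j \<le> m"
  shows "[e_coef m k j = (\<Prod>l\<in>{1..m-1}. int l ^ k l)] (mod int m)"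
proof -
  have "[cyc_diff m j l ^ k l = int l ^ k l] (mod int m)" for l
    by (intro cong_pow) (simp add: cong_def cyc_diff_mod)
  then show ?thesis
    unfolding e_coef_eq_prod_cyc_diff[OF assms] by (intro cong_prod) auto
qed

lemma d_coef_dvd:
  assumes "m \<ge> 2"
  shows "int m dvd d_coef m k"
proof -
  define p where "p = m div 2"
  define C where "C = (\<Prod>l\<in>{1..m-1}. int l ^ k l)"
  have dvd_e: "int m dvd e_coef m k j - C" if "1 \<le> j" "j \<le> m" for j
    using e_coef_cong_prod[OF that, of k] unfolding C_def by (simp add: cong_iff_dvd_diff)
  have dvd_sum: "int m dvd (\<Sum>j=1..p. e_coef m k j - C)"
    unfolding p_def by (intro dvd_sum dvd_e) auto
  have sum_eq: "(\<Sum>j=1..p. e_coef m k j) = (\<Sum>j=1..p. e_coef m k j - C) + int p * C"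
    by (simp add: sum_subtractf)
  show ?thesis
  proof (cases "even m")
    case True
    then have "int m = 2 * int p" unfolding p_def by auto
    then have "d_coef m k = 2 * (\<Sum>j=1..p. e_coef m k j - C) + int m * C"
      unfolding d_coef_def using True p_def sum_eq by (simp add: algebra_simps)
    then show ?thesis using dvd_sum by simp
  next
    case False
    then have m: "int m = 2 * int p + 1" unfolding p_def by presburger
    have "int m dvd e_coef m k (p + 1) - C"
      using False assms unfolding p_def by (intro dvd_e) auto
    moreover have "d_coef m k =
        (e_coef m k (p + 1) - C) + 2 * (\<Sum>j=1..p. e_coef m k j - C) + int m * C"
      unfolding d_coef_def using False p_def sum_eq m by (simp add: algebra_simps)
    ultimately show ?thesis using dvd_sum by simp
  qed
qed

lemma e_coef_Suc:
  assumes "1 \<le> j" "j < m"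
  shows "e_coef m k (Suc j) * int (m - j) ^ k (m - j) = e_coef m k j * (- int j) ^ k (m - j)"
proof -
  let ?L = "m - j"
  have L: "?L \<in> {1..m-1}" using assms by auto
  have other_factors: "(\<Prod>l\<in>{1..m-1} - {?L}. cyc_diff m (Suc j) l ^ k l) =
      (\<Prod>l\<in>{1..m-1} - {?L}. cyc_diff m j l ^ k l)"
  proof (rule prod.cong)
    fix l assume "l \<in> {1..m-1} - {?L}"
    then have "(l \<le> m - Suc j) = (l \<le> m - j)" by auto
    then show "cyc_diff m (Suc j) l ^ k l = cyc_diff m j l ^ k l" by (simp add: cyc_diff_def)
  qed simp
  have "e_coef m k (Suc j) =
      cyc_diff m (Suc j) ?L ^ k ?L * (\<Prod>l\<in>{1..m-1} - {?L}. cyc_diff m (Suc j) l ^ k l)"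
    using e_coef_eq_prod_cyc_diff[of "Suc j" m k] assms prod.remove[OF _ L] by simp
  moreover have "e_coef m k j =
      cyc_diff m j ?L ^ k ?L * (\<Prod>l\<in>{1..m-1} - {?L}. cyc_diff m j l ^ k l)"
    using e_coef_eq_prod_cyc_diff[of j m k] assms prod.remove[OF _ L] by simp
  moreover have "cyc_diff m (Suc j) ?L = - int j" "cyc_diff m j ?L = int (m - j)"
    using assms by (simp_all add: cyc_diff_def)
  ultimately show ?thesis unfolding other_factors by (simp add: algebra_simps)
qed

lemma e_coef_Suc_real:
  assumes "1 \<le> j" "j < m"
  shows "real_of_int (e_coef m k (Suc j)) =
    (- (real j / (real m - real j))) ^ k (m - j) * real_of_int (e_coef m k j)"
proof -
  have ratio: "x = (c / d) ^ n * y" if "0 < d" "x * d ^ n = y * c ^ n" for x y c d :: real and n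
    using that by (simp add: power_divide field_simps)
  have "real_of_int (e_coef m k (Suc j)) * (real m - real j) ^ k (m - j) =
      real_of_int (e_coef m k j) * (- real j) ^ k (m - j)"
    using arg_cong[OF e_coef_Suc[OF assms, of k], of real_of_int] assms by (simp add: of_nat_diff)
  from ratio[OF _ this] assms show ?thesis
    by simp
qed

lemma neg_power_bounds:
  fixes c :: real
  assumes "0 \<le> c" "c \<le> 1"
  shows "- c \<le> (- c) ^ n \<and> (- c) ^ n \<le> 1"
proof (cases n)
  case 0
  then show ?thesis using assms by simp
next
  case (Suc n')
  have "c ^ n \<le> c" using assms Suc power_decreasing[of 1 n c] by simp
  moreover have "\<bar>(- c) ^ n\<bar> = c ^ n" using assms by (simp add: power_abs)
  ultimately show ?thesis using assms abs_le_iff[of "(- c) ^ n"] by linarith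
qed

lemma mult_bounded_ratio:
  fixes r t a b :: real
  assumes "0 < a" "a \<le> b" "- (a / b) \<le> r" "r \<le> 1" "- a < t" "t < b"
  shows "- a < r * t \<and> r * t < b"
proof -
  have "0 < b" using assms by linarith
  have "a / b \<le> 1" using assms \<open>0 < b\<close> by simp
  have abs_r: "\<bar>r\<bar> \<le> 1" using assms \<open>a / b \<le> 1\<close> by linarith
  consider "0 \<le> r * t" | "r < 0" "0 < t" | "0 < r" "t < 0"
    by (metis linorder_not_le mult_nonneg_nonneg mult_nonpos_nonpos order.strict_iff_order)
  then show ?thesis
  proof cases
    case 1
    have "\<bar>r * t\<bar> \<le> \<bar>t\<bar>" using abs_r by (simp add: abs_mult mult_left_le_one_le)
    then show ?thesis using 1 assms by linarith
  next
    case 2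
    have "- (a / b) * t \<le> r * t" using assms 2 by (intro mult_right_mono) auto
    moreover have "a / b * t < a / b * b" using assms \<open>0 < b\<close> 2 by (intro mult_strict_left_mono) auto
    ultimately show ?thesis using \<open>0 < b\<close> 2 mult_neg_pos[of r t] by simp
  next
    case 3
    have "t \<le> r * t" using 3 assms mult_less_cancel_left_disj by fastforce
    then show ?thesis using 3 assms \<open>0 < b\<close> mult_pos_neg[of r t] by linarith
  qed
qed

text \<open>The invariant of the backward induction: q_i = (\<Sum>_{t=i}^p x_t + h) / x_i satisfies
q_i = 1 + (x_{i+1}/x_i) q_{i+1}, and multiplication by a ratio in [-i/(m-i), 1] maps the
interval (-i, m-i) into itself.\<close>

lemma tail_quotient_bounds:
  fixes x :: "nat \<Rightarrow> real" and m p i :: nat and h :: real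
  assumes "2 * p \<le> m"
    and nonzero: "\<And>j. 1 \<le> j \<Longrightarrow> j \<le> p + 1 \<Longrightarrow> x j \<noteq> 0"
    and ratio: "\<And>j. 1 \<le> j \<Longrightarrow> j \<le> p \<Longrightarrow>
      - (real j / (real m - real j)) \<le> x (Suc j) / x j \<and> x (Suc j) / x j \<le> 1"
    and last: "- real p < h / x (p + 1)" "h / x (p + 1) < real m - real p"
    and "1 \<le> i" "i \<le> p + 1"
  shows "- (real i - 1) < ((\<Sum>t=i..p. x t) + h) / x i \<and>
    ((\<Sum>t=i..p. x t) + h) / x i < real m - real i + 1"
  using \<open>i \<le> p + 1\<close> \<open>1 \<le> i\<close>
proof (induction i rule: inc_induct)
  case base
  then show ?case using last by simp
next
  case (step n)
  define T where "T = ((\<Sum>t=Suc n..p. x t) + h) / x (Suc n)"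
  define r where "r = x (Suc n) / x n"
  have "n \<le> p" using step.hyps by simp
  have "x n \<noteq> 0" "x (Suc n) \<noteq> 0"
    using nonzero step.prems \<open>n \<le> p\<close> by simp_all
  then have "((\<Sum>t=n..p. x t) + h) / x n = 1 + r * T"
    using \<open>n \<le> p\<close> by (simp add: T_def r_def sum.atLeast_Suc_atMost field_simps)
  moreover have "- real n < r * T \<and> r * T < real m - real n"
  proof (rule mult_bounded_ratio)
    show "0 < real n" "real n \<le> real m - real n"
      using step.prems \<open>n \<le> p\<close> \<open>2 * p \<le> m\<close> by simp_all
    show "- (real n / (real m - real n)) \<le> r" "r \<le> 1"
      using ratio[of n] step.prems \<open>n \<le> p\<close> by (simp_all add: r_def)
    show "- real n < T" "T < real m - real n"
      using step.IH by (simp_all add: T_def)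
  qed
  ultimately show ?case by simp
qed

lemma sum_pos_of_ratio_bounds:
  fixes x :: "nat \<Rightarrow> real" and m p :: nat and h :: real
  assumes "2 * p \<le> m" "0 < x 1"
    and "\<And>j. 1 \<le> j \<Longrightarrow> j \<le> p + 1 \<Longrightarrow> x j \<noteq> 0"
    and "\<And>j. 1 \<le> j \<Longrightarrow> j \<le> p \<Longrightarrow>
      - (real j / (real m - real j)) \<le> x (Suc j) / x j \<and> x (Suc j) / x j \<le> 1"
    and "- real p < h / x (p + 1)" "h / x (p + 1) < real m - real p"
  shows "0 < (\<Sum>t=1..p. x t) + h"
proof -
  have "0 < ((\<Sum>t=1..p. x t) + h) / x 1"
    using tail_quotient_bounds[of p m x h 1] assms by simp
  with \<open>0 < x 1\<close> show ?thesis
    by (simp add: zero_less_divide_iff)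
qed

lemma d_coef_pos:
  assumes "m \<ge> 2"
  shows "d_coef m k > 0"
proof -
  define p where "p = m div 2"
  define x where "x j = real_of_int (e_coef m k j)" for j
  define h where "h = (if even m then 0 else x (p + 1) / 2)"
  have "2 * p \<le> m" "1 \<le> p" using assms by (simp_all add: p_def)
  have nonzero: "x j \<noteq> 0" if "1 \<le> j" "j \<le> p + 1" for j
    using that e_coef_nonzero[of j m k] \<open>2 * p \<le> m\<close> \<open>1 \<le> p\<close> by (simp add: x_def)
  have "- (real j / (real m - real j)) \<le> x (Suc j) / x j \<and> x (Suc j) / x j \<le> 1"
    if "1 \<le> j" "j \<le> p" for j
  proof -
    have "x (Suc j) / x j = (- (real j / (real m - real j))) ^ k (m - j)"
      using that e_coef_Suc_real[of j m k] nonzero[of j] \<open>2 * p \<le> m\<close> by (simp add: x_def)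
    moreover have "0 \<le> real j / (real m - real j)" "real j / (real m - real j) \<le> 1"
      using that \<open>2 * p \<le> m\<close> by simp_all
    ultimately show ?thesis
      using neg_power_bounds[of "real j / (real m - real j)"] by simp
  qed
  moreover have "- real p < h / x (p + 1) \<and> h / x (p + 1) < real m - real p"
    using nonzero[of "p + 1"] \<open>1 \<le> p\<close> \<open>2 * p \<le> m\<close> by (auto simp: h_def)
  moreover have "0 < x 1"
    using e_coef_1_pos[of m k] assms by (simp add: x_def)
  ultimately have "0 < (\<Sum>t=1..p. x t) + h"
    using sum_pos_of_ratio_bounds[of p m x h] nonzero \<open>2 * p \<le> m\<close> by blast
  moreover have "real_of_int (d_coef m k) = 2 * ((\<Sum>t=1..p. x t) + h)"
    by (simp add: d_coef_def x_def h_def p_def)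
  ultimately show ?thesis by simp
qed

theorem mainTheorem15:
  fixes m :: nat and k :: "nat \<Rightarrow> nat"
  assumes "m \<ge> 2"
  shows "d_coef m k > 0 \<and> int m dvd d_coef m k"
  using d_coef_pos[OF assms] d_coef_dvd[OF assms] by simp

end
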